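(* Let $G$ be a graph, $\mathcal{F}$ a set of cycles, $x \in V(G)$, and $Y \subseteq V(G)\setminus\{x\}$ such that $N[Y] \cap V(G - Y) \subseteq \{x\}$ and $G[\{x\}\cup Y]$ contains no $\mathcal{F}$-graph. Then $\iota(G,\mathcal{F}) = \iota(G - Y, \mathcal{F})$, and every $\mathcal{F}$-isolating set of $G - Y$ is an $\mathcal{F}$-isolating set of $G$.
   Context: All graphs are finite and simple; cycles are graphs isomorphic to $C_k$ for some $k\ge 3$. For a set $\mathcal{F}$ of graphs, an $\mathcal{F}$-graph is a graph isomorphic to a member of $\mathcal{F}$. For $X \subseteq V(G)$, $N[X]$ is the closed neighbourhood $\bigcup_{v\in X}(\{v\}\cup N(v))$, $G[X]$ is the subgraph induced by $X$, and $G - X$ is the subgraph induced by $V(G)\setminus X$. A set $D\subseteq V(G)$ is an $\mathcal{F}$-isolating set of $G$ if $G - N[D]$ contains no $\mathcal{F}$-graph as a subgraph; $\iota(G,\mathcal{F})$ is the minimum size of an $\mathcal{F}$-isolating set of $G$. *)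

theory Defs
  imports Main
begin

type_synonym 'a graph = "'a set \<times> 'a set set"

abbreviation verts :: "'a graph \<Rightarrow> 'a set" where "verts G \<equiv> fst G"
abbreviation edges :: "'a graph \<Rightarrow> 'a set set" where "edges G \<equiv> snd G"

definition graph :: "'a graph \<Rightarrow> bool" where
  "graph G \<longleftrightarrow> finite (verts G) \<and>
     (\<forall>e\<in>edges G. \<exists>u v. e = {u, v} \<and> u \<noteq> v \<and> u \<in> verts G \<and> v \<in> verts G)"

definition graph_iso :: "'a graph \<Rightarrow> 'b graph \<Rightarrow> bool" where
  "graph_iso G H \<longleftrightarrow> (\<exists>f. bij_betw f (verts G) (verts H) \<and>
     (\<forall>u\<in>verts G. \<forall>v\<in>verts G. {u, v} \<in> edges G \<longleftrightarrow> {f u, f v} \<in> edges H))"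

definition cycle_graph :: "nat \<Rightarrow> nat graph" where
  "cycle_graph k = ({0..<k}, {{i, (i + 1) mod k} | i. i < k})"

definition is_cycle :: "'a graph \<Rightarrow> bool" where
  "is_cycle H \<longleftrightarrow> graph H \<and> (\<exists>k\<ge>3. graph_iso H (cycle_graph k))"

definition subgraph :: "'a graph \<Rightarrow> 'a graph \<Rightarrow> bool" where
  "subgraph H G \<longleftrightarrow> graph H \<and> verts H \<subseteq> verts G \<and> edges H \<subseteq> edges G"

definition contains_F :: "'a graph \<Rightarrow> 'b graph set \<Rightarrow> bool" where
  "contains_F G \<F> \<longleftrightarrow> (\<exists>H. subgraph H G \<and> (\<exists>F\<in>\<F>. graph_iso H F))"

definition closed_nbhd :: "'a graph \<Rightarrow> 'a set \<Rightarrow> 'a set" where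
  "closed_nbhd G X = X \<union> {v. \<exists>u\<in>X. {u, v} \<in> edges G}"

definition induced :: "'a graph \<Rightarrow> 'a set \<Rightarrow> 'a graph" where
  "induced G X = (X, {e \<in> edges G. e \<subseteq> X})"

definition remove :: "'a graph \<Rightarrow> 'a set \<Rightarrow> 'a graph" where
  "remove G X = induced G (verts G - X)"

definition isolating :: "'a graph \<Rightarrow> 'b graph set \<Rightarrow> 'a set \<Rightarrow> bool" where
  "isolating G \<F> D \<longleftrightarrow> D \<subseteq> verts G \<and> \<not> contains_F (remove G (closed_nbhd G D)) \<F>"

definition iota :: "'a graph \<Rightarrow> 'b graph set \<Rightarrow> nat" where
  "iota G \<F> = (LEAST n. \<exists>D. isolating G \<F> D \<and> card D = n)"

end

theory Submission
  imports Defs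
begin

text \<open>Every edge leaving \<open>Y\<close> ends in \<open>x\<close>, and a cycle stays connected when one vertex is
  deleted, so an \<open>\<F>\<close>-graph of \<open>G\<close> lies either in \<open>G[{x} \<union> Y]\<close>, which is excluded, or in
  \<open>G - Y\<close>. Hence an \<open>\<F>\<close>-isolating set of \<open>G - Y\<close> isolates \<open>G\<close> as well. Conversely, replacing
  the vertices of \<open>Y\<close> in an \<open>\<F>\<close>-isolating set of \<open>G\<close> by the single vertex \<open>x\<close> gives an
  \<open>\<F>\<close>-isolating set of \<open>G - Y\<close> that is no larger, because outside \<open>Y\<close> every neighbour of
  \<open>Y\<close> is \<open>x\<close> itself.\<close>

lemma graph_iso_trans:
  assumes "graph_iso A B" "graph_iso B C"
  shows "graph_iso A C"
proof -
  obtain f where f: "bij_betw f (verts A) (verts B)"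
    "\<forall>u\<in>verts A. \<forall>v\<in>verts A. {u, v} \<in> edges A \<longleftrightarrow> {f u, f v} \<in> edges B"
    using assms(1) unfolding graph_iso_def by blast
  obtain g where g: "bij_betw g (verts B) (verts C)"
    "\<forall>u\<in>verts B. \<forall>v\<in>verts B. {u, v} \<in> edges B \<longleftrightarrow> {g u, g v} \<in> edges C"
    using assms(2) unfolding graph_iso_def by blast
  have "bij_betw (g \<circ> f) (verts A) (verts C)"
    using f(1) g(1) by (rule bij_betw_trans)
  moreover have "\<forall>u\<in>verts A. \<forall>v\<in>verts A. {u, v} \<in> edges A \<longleftrightarrow> {(g \<circ> f) u, (g \<circ> f) v} \<in> edges C"
    using f g bij_betw_apply[OF f(1)] by auto
  ultimately show ?thesis
    unfolding graph_iso_def by blast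
qed

lemma subgraph_induced_iff:
  "subgraph H (induced G A) \<longleftrightarrow> graph H \<and> verts H \<subseteq> A \<and> edges H \<subseteq> edges G"
proof -
  have "e \<subseteq> verts H" if "graph H" "e \<in> edges H" for e
    using that unfolding graph_def by force
  then show ?thesis
    unfolding subgraph_def induced_def by auto
qed

lemma contains_F_induced_mono:
  assumes "A \<subseteq> B" "contains_F (induced G A) \<F>"
  shows "contains_F (induced G B) \<F>"
  using assms unfolding contains_F_def subgraph_induced_iff by blast

lemma verts_remove [simp]: "verts (remove G Y) = verts G - Y"
  unfolding remove_def induced_def by simp

lemma edges_remove [simp]: "edges (remove G Y) = {e \<in> edges G. e \<subseteq> verts G - Y}"
  unfolding remove_def induced_def by simp

lemma remove_remove: "remove (remove G Y) S = induced G (verts G - Y - S)"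
  unfolding remove_def induced_def by auto

lemma closed_nbhd_remove_subset: "closed_nbhd (remove G Y) D \<subseteq> closed_nbhd G D"
  unfolding closed_nbhd_def by auto

lemma closed_nbhd_separatorD:
  assumes "closed_nbhd G Y \<inter> (verts G - Y) \<subseteq> {x}" "u \<in> Y" "v \<in> verts G - Y" "{u, v} \<in> edges G"
  shows "v = x"
  using assms unfolding closed_nbhd_def by blast

lemma iff_chain_interval:
  fixes R :: "nat \<Rightarrow> bool"
  assumes "\<And>n. a \<le> n \<Longrightarrow> Suc n < b \<Longrightarrow> R n \<longleftrightarrow> R (Suc n)"
    and "a \<le> j" "j < b"
  shows "R j \<longleftrightarrow> R a"
  using assms(2,3) by (induction j rule: dec_induct) (use assms(1) in auto)

lemma cycle_graph_minus_vertex_connected: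
  fixes Q :: "nat \<Rightarrow> bool" and c k :: nat
  assumes step: "\<And>i. i < k \<Longrightarrow> i \<noteq> c \<Longrightarrow> Suc i mod k \<noteq> c \<Longrightarrow> Q i \<longleftrightarrow> Q (Suc i mod k)"
    and "i < k" "j < k" "i \<noteq> c" "j \<noteq> c"
  shows "Q i \<longleftrightarrow> Q j"
proof (cases "c < k")
  case True
  \<comment> \<open>Walk around the cycle from \<open>c + 1\<close> to \<open>c + k - 1\<close>, which avoids \<open>c\<close>.\<close>
  define R where "R n = Q ((c + n) mod k)" for n
  have off_c: "(c + n) mod k \<noteq> c" if "0 < n" "n < k" for n
    using True that by (cases "c + n < k") (auto simp: mod_if)
  have "R n \<longleftrightarrow> R (Suc n)" if "1 \<le> n" "Suc n < k" for n
    using step[of "(c + n) mod k"] off_c[of n] off_c[of "Suc n"] that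
    unfolding R_def by (simp add: mod_Suc_eq)
  then have R_const: "R n \<longleftrightarrow> R 1" if "1 \<le> n" "n < k" for n
    using iff_chain_interval that by blast
  have "Q i \<longleftrightarrow> R 1" if "i < k" "i \<noteq> c" for i
  proof -
    define n where "n = (if c \<le> i then i - c else i + k - c)"
    have "(c + n) mod k = i" "0 < n" "n < k"
      using True that unfolding n_def by auto
    then show ?thesis
      using R_const[of n] unfolding R_def by simp
  qed
  then show ?thesis
    using assms(2-5) by blast
next
  case False
  have "Q n \<longleftrightarrow> Q (Suc n)" if "Suc n < k" for n
    using step[of n] False that by simp
  then show ?thesis
    using iff_chain_interval[of 0 k Q] assms(2,3) by blast
qed

lemma iso_cycle_graph_minus_vertex_connected:
  assumes iso: "graph_iso H (cycle_graph k)"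
    and edge: "\<And>u v. {u, v} \<in> edges H \<Longrightarrow> u \<in> verts H \<Longrightarrow> v \<in> verts H \<Longrightarrow> u \<noteq> x \<Longrightarrow> v \<noteq> x
      \<Longrightarrow> P u \<longleftrightarrow> P v"
    and "u \<in> verts H - {x}" "v \<in> verts H - {x}"
  shows "P u \<longleftrightarrow> P v"
proof -
  obtain \<phi> where \<phi>: "bij_betw \<phi> (verts H) {0..<k}"
    "\<forall>u\<in>verts H. \<forall>v\<in>verts H. {u, v} \<in> edges H \<longleftrightarrow> {\<phi> u, \<phi> v} \<in> edges (cycle_graph k)"
    using iso unfolding graph_iso_def cycle_graph_def by auto
  define \<psi> where "\<psi> = inv_into (verts H) \<phi>"
  have \<psi>: "\<psi> i \<in> verts H" "\<phi> (\<psi> i) = i" if "i < k" for i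
    using that \<phi>(1) bij_betw_inv_into_right[OF \<phi>(1)] bij_betw_apply[OF bij_betw_inv_into[OF \<phi>(1)]]
    unfolding \<psi>_def by auto
  have \<phi>_range: "\<phi> w < k" if "w \<in> verts H" for w
    using that bij_betw_apply[OF \<phi>(1)] by fastforce
  define c where "c = (if x \<in> verts H then \<phi> x else k)"
  \<comment> \<open>\<open>c\<close> is the position of \<open>x\<close> on the cycle, or out of range if \<open>x\<close> is not on it.\<close>
  have "P (\<psi> i) \<longleftrightarrow> P (\<psi> j)" if "i < k" "j < k" "i \<noteq> c" "j \<noteq> c" for i j
  proof (rule cycle_graph_minus_vertex_connected[where c = c and k = k, OF _ that])
    fix i assume i: "i < k" "i \<noteq> c" "Suc i mod k \<noteq> c"
    have i': "Suc i mod k < k"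
      using i(1) by simp
    have "{\<phi> (\<psi> i), \<phi> (\<psi> (Suc i mod k))} \<in> edges (cycle_graph k)"
      using i(1) i' \<psi>(2) unfolding cycle_graph_def by auto
    then have "{\<psi> i, \<psi> (Suc i mod k)} \<in> edges H"
      using \<phi>(2) \<psi>(1) i(1) i' by blast
    moreover have "\<psi> n \<noteq> x" if "n < k" "n \<noteq> c" for n
      using \<psi>[OF \<open>n < k\<close>] that unfolding c_def by auto
    ultimately show "P (\<psi> i) \<longleftrightarrow> P (\<psi> (Suc i mod k))"
      using edge \<psi>(1) i i' by blast
  qed
  moreover have "\<phi> w \<noteq> c" "\<psi> (\<phi> w) = w" if "w \<in> verts H - {x}" for w
    using that \<phi>_range bij_betw_inv_into_left[OF \<phi>(1)] bij_betw_imp_inj_on[OF \<phi>(1)]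
    unfolding c_def \<psi>_def by (auto dest: inj_onD)
  ultimately show ?thesis
    using assms(3,4) \<phi>_range by (metis Diff_iff)
qed

lemma iso_cycle_verts_nonempty:
  assumes "graph_iso H F" "is_cycle F"
  shows "verts H \<noteq> {}"
proof -
  obtain k where k: "k \<ge> 3" "graph_iso F (cycle_graph k)"
    using assms(2) unfolding is_cycle_def by blast
  then obtain f where "bij_betw f (verts H) {0..<k}"
    using graph_iso_trans[OF assms(1) k(2)] unfolding graph_iso_def cycle_graph_def by auto
  then have "card (verts H) = k"
    by (simp add: bij_betw_same_card)
  then show ?thesis
    using k(1) by auto
qed

lemma cycle_subgraph_inside_or_outside:
  assumes "subgraph H G" "is_cycle F" "graph_iso H F" "x \<notin> Y"
    and sep: "closed_nbhd G Y \<inter> (verts G - Y) \<subseteq> {x}"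
  shows "verts H \<subseteq> insert x Y \<or> verts H \<inter> Y = {}"
proof -
  obtain k where "graph_iso F (cycle_graph k)"
    using assms(2) unfolding is_cycle_def by blast
  then have iso: "graph_iso H (cycle_graph k)"
    using assms(3) graph_iso_trans by blast
  have HG: "verts H \<subseteq> verts G" "edges H \<subseteq> edges G"
    using assms(1) unfolding subgraph_def by auto
  have "u \<in> Y \<longleftrightarrow> v \<in> Y" if "u \<in> verts H - {x}" "v \<in> verts H - {x}" for u v
  proof (rule iso_cycle_graph_minus_vertex_connected[OF iso _ that])
    fix u v assume uv: "{u, v} \<in> edges H" "u \<in> verts H" "v \<in> verts H" "u \<noteq> x" "v \<noteq> x"
    then have "{u, v} \<in> edges G" "{v, u} \<in> edges G"
      using HG by (auto simp: insert_commute)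
    then show "u \<in> Y \<longleftrightarrow> v \<in> Y"
      using closed_nbhd_separatorD[OF sep] uv HG by blast
  qed
  then show ?thesis
    using assms(4) by blast
qed

lemma isolating_of_isolating_remove:
  assumes cycles: "\<forall>F\<in>\<F>. is_cycle F" and "x \<notin> Y"
    and sep: "closed_nbhd G Y \<inter> (verts G - Y) \<subseteq> {x}"
    and no_F: "\<not> contains_F (induced G (insert x Y)) \<F>"
    and D: "isolating (remove G Y) \<F> D"
  shows "isolating G \<F> D"
proof -
  have "\<not> contains_F (remove G (closed_nbhd G D)) \<F>"
  proof
    assume "contains_F (remove G (closed_nbhd G D)) \<F>"
    then obtain H F where H: "graph H" "verts H \<subseteq> verts G - closed_nbhd G D" "edges H \<subseteq> edges G"
      and F: "F \<in> \<F>" "graph_iso H F"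
      unfolding contains_F_def remove_def subgraph_induced_iff by blast
    then have "subgraph H G"
      unfolding subgraph_def by blast
    moreover have "is_cycle F"
      using cycles F(1) by blast
    ultimately consider "verts H \<subseteq> insert x Y" | "verts H \<inter> Y = {}"
      using cycle_subgraph_inside_or_outside[OF _ _ F(2) \<open>x \<notin> Y\<close> sep] by blast
    then show False
    proof cases
      case 1
      then show False
        using no_F H F unfolding contains_F_def subgraph_induced_iff by blast
    next
      case 2
      then have "verts H \<subseteq> verts G - Y - closed_nbhd (remove G Y) D"
        using H(2) closed_nbhd_remove_subset[of G Y D] by blast
      then show False
        using D H F unfolding isolating_def contains_F_def remove_remove subgraph_induced_iff
        by blast
    qed
  qed
  then show ?thesis
    using D unfolding isolating_def by auto
qed

definition contract_into :: "'a set \<Rightarrow> 'a \<Rightarrow> 'a set \<Rightarrow> 'a set" where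
  "contract_into Y x D = D - Y \<union> (if D \<inter> Y = {} then {} else {x})"

lemma card_contract_into_le:
  assumes "finite D"
  shows "card (contract_into Y x D) \<le> card D"
proof (cases "D \<inter> Y = {}")
  case False
  then have "card (D - Y) < card D"
    using assms by (intro psubset_card_mono) auto
  then show ?thesis
    unfolding contract_into_def using False assms by (simp add: card_insert_if)
qed (simp add: contract_into_def Diff_triv)

lemma closed_nbhd_subset_closed_nbhd_remove_contract_into:
  assumes sep: "closed_nbhd G Y \<inter> (verts G - Y) \<subseteq> {x}" and "D \<subseteq> verts G"
  shows "closed_nbhd G D \<inter> (verts G - Y) \<subseteq> closed_nbhd (remove G Y) (contract_into Y x D)"
proof
  fix v assume v: "v \<in> closed_nbhd G D \<inter> (verts G - Y)"
  then obtain u where u: "u \<in> D" "u = v \<or> {u, v} \<in> edges G"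
    unfolding closed_nbhd_def by blast
  show "v \<in> closed_nbhd (remove G Y) (contract_into Y x D)"
  proof (cases "u \<in> Y")
    case True
    then have "v = x" "x \<in> contract_into Y x D"
      using u v closed_nbhd_separatorD[OF sep] unfolding contract_into_def by auto
    then show ?thesis
      unfolding closed_nbhd_def by blast
  next
    case False
    then have "u \<in> contract_into Y x D" "u \<in> verts G"
      using u assms(2) unfolding contract_into_def by auto
    then show ?thesis
      using u v False unfolding closed_nbhd_def by auto
  qed
qed

lemma isolating_remove_contract_into:
  assumes "x \<in> verts G" "Y \<subseteq> verts G - {x}"
    and sep: "closed_nbhd G Y \<inter> (verts G - Y) \<subseteq> {x}"
    and D: "isolating G \<F> D"
  shows "isolating (remove G Y) \<F> (contract_into Y x D)"
proof -
  have DG: "D \<subseteq> verts G"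
    using D unfolding isolating_def by blast
  then have sub: "verts G - Y - closed_nbhd (remove G Y) (contract_into Y x D)
      \<subseteq> verts G - closed_nbhd G D"
    using closed_nbhd_subset_closed_nbhd_remove_contract_into[OF sep] by blast
  have "\<not> contains_F (remove (remove G Y) (closed_nbhd (remove G Y) (contract_into Y x D))) \<F>"
    using D contains_F_induced_mono[OF sub, of G \<F>] unfolding remove_remove
    by (auto simp: isolating_def remove_def)
  moreover have "contract_into Y x D \<subseteq> verts G - Y"
    unfolding contract_into_def using DG assms(1,2) by auto
  ultimately show ?thesis
    unfolding isolating_def by simp
qed

lemma isolating_verts:
  assumes "\<forall>F\<in>\<F>. is_cycle F"
  shows "isolating G \<F> (verts G)"
  using assms iso_cycle_verts_nonempty
  unfolding isolating_def contains_F_def remove_def subgraph_induced_iff closed_nbhd_def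
  by blast

lemma iota_le_card: "isolating G \<F> D \<Longrightarrow> iota G \<F> \<le> card D"
  unfolding iota_def by (auto intro: Least_le)

lemma ex_isolating_card_iota:
  assumes "isolating G \<F> D"
  obtains D' where "isolating G \<F> D'" "card D' = iota G \<F>"
  using LeastI[where P = "\<lambda>n. \<exists>D. isolating G \<F> D \<and> card D = n"] assms
  unfolding iota_def by blast

theorem lemma3:
  fixes G :: "'a graph" and \<F> :: "nat graph set" and x :: 'a and Y :: "'a set"
  assumes "graph G"
    and "\<forall>F\<in>\<F>. is_cycle F"
    and "x \<in> verts G"
    and "Y \<subseteq> verts G - {x}"
    and "closed_nbhd G Y \<inter> verts (remove G Y) \<subseteq> {x}"
    and "\<not> contains_F (induced G ({x} \<union> Y)) \<F>"
  shows "iota G \<F> = iota (remove G Y) \<F> \<and>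
    (\<forall>D. isolating (remove G Y) \<F> D \<longrightarrow> isolating G \<F> D)"
proof -
  have sep: "closed_nbhd G Y \<inter> (verts G - Y) \<subseteq> {x}"
    using assms(5) by simp
  have lift: "isolating G \<F> D" if "isolating (remove G Y) \<F> D" for D
    using isolating_of_isolating_remove[OF assms(2) _ sep] assms(4,6) that by auto
  obtain D where D: "isolating G \<F> D" "card D = iota G \<F>"
    using ex_isolating_card_iota isolating_verts[OF assms(2)] by metis
  obtain D\<^sub>Y where D\<^sub>Y: "isolating (remove G Y) \<F> D\<^sub>Y" "card D\<^sub>Y = iota (remove G Y) \<F>"
    using ex_isolating_card_iota isolating_verts[OF assms(2)] by metis
  have "finite D"
    using D(1) assms(1) finite_subset unfolding isolating_def graph_def by blast
  have "iota G \<F> \<le> iota (remove G Y) \<F>"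
    using iota_le_card[OF lift[OF D\<^sub>Y(1)]] D\<^sub>Y(2) by simp
  moreover have "iota (remove G Y) \<F> \<le> iota G \<F>"
    using iota_le_card[OF isolating_remove_contract_into[OF assms(3,4) sep D(1)]]
      card_contract_into_le[OF \<open>finite D\<close>, of Y x] D(2) by simp
  ultimately show ?thesis
    using lift by auto
qed

end
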